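(* Let $n=n_1+\dots+n_m$ with each $n_i\in\{1,2,3\}$, partition $[n]$ into disjoint blocks $B_1,\dots,B_m$ with $|B_i|=n_i$, and let $f(S)=\sum_{i=1}^m f_i(S\cap B_i)$ where each $f_i:2^{B_i}\to\mathbb{R}_+$ is monotone submodular. Then $f^{+}(\mathbf{x})/f^{++}(\mathbf{x})\le4/3$ for all $\mathbf{x}\in[0,1]^n$ (with the convention $0/0=1$).
   Context: $[n]=\{1,\dots,n\}$. A set function $f:2^{V}\to\mathbb{R}_+$ is monotone if $f(S)\le f(T)$ for $S\subseteq T$, submodular if $f(S)+f(T)\ge f(S\cap T)+f(S\cup T)$. For $\mathbf{x}\in[0,1]^n$: the concave closure $f^{+}(\mathbf{x})=\max\sum_{S\subseteq[n]}\theta(S)f(S)$ over $\theta:2^{[n]}\to\mathbb{R}_{\ge0}$ with $\sum_S\theta(S)=1$ and $\sum_{S\ni i}\theta(S)=x_i$ for all $i$; the upper pairwise independent extension $f^{++}(\mathbf{x})$ is the same maximum with the additional constraints $\sum_{S\ni i,j}\theta(S)=x_ix_j$ for all $i<j$. *)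

theory Defs
  imports Complex_Main
begin

definition is_distribution :: "nat \<Rightarrow> (nat set \<Rightarrow> real) \<Rightarrow> bool" where
  "is_distribution n \<theta> \<longleftrightarrow>
     (\<forall>S. 0 \<le> \<theta> S) \<and> (\<forall>S. \<not> S \<subseteq> {1..n} \<longrightarrow> \<theta> S = 0) \<and>
     (\<Sum>S\<in>Pow {1..n}. \<theta> S) = 1"

definition marginals_ok :: "nat \<Rightarrow> (nat \<Rightarrow> real) \<Rightarrow> (nat set \<Rightarrow> real) \<Rightarrow> bool" where
  "marginals_ok n x \<theta> \<longleftrightarrow>
     (\<forall>i\<in>{1..n}. (\<Sum>S\<in>{S\<in>Pow {1..n}. i \<in> S}. \<theta> S) = x i)"

definition pairwise_ok :: "nat \<Rightarrow> (nat \<Rightarrow> real) \<Rightarrow> (nat set \<Rightarrow> real) \<Rightarrow> bool" where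
  "pairwise_ok n x \<theta> \<longleftrightarrow>
     (\<forall>i\<in>{1..n}. \<forall>j\<in>{1..n}. i < j \<longrightarrow>
        (\<Sum>S\<in>{S\<in>Pow {1..n}. i \<in> S \<and> j \<in> S}. \<theta> S) = x i * x j)"

text \<open>Concave closure f^+(x): maximum of the expected value over feasible distributions
  (the maximum is attained, as the feasible set is a nonempty compact polytope).\<close>
definition concave_closure :: "nat \<Rightarrow> (nat set \<Rightarrow> real) \<Rightarrow> (nat \<Rightarrow> real) \<Rightarrow> real" where
  "concave_closure n f x = Sup {(\<Sum>S\<in>Pow {1..n}. \<theta> S * f S) | \<theta>.
       is_distribution n \<theta> \<and> marginals_ok n x \<theta>}"

definition upper_pi_ext :: "nat \<Rightarrow> (nat set \<Rightarrow> real) \<Rightarrow> (nat \<Rightarrow> real) \<Rightarrow> real" where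
  "upper_pi_ext n f x = Sup {(\<Sum>S\<in>Pow {1..n}. \<theta> S * f S) | \<theta>.
       is_distribution n \<theta> \<and> marginals_ok n x \<theta> \<and> pairwise_ok n x \<theta>}"

definition monotone_set_fun :: "'a set \<Rightarrow> ('a set \<Rightarrow> real) \<Rightarrow> bool" where
  "monotone_set_fun V g \<longleftrightarrow> (\<forall>S T. S \<subseteq> T \<longrightarrow> T \<subseteq> V \<longrightarrow> g S \<le> g T)"

definition submodular_set_fun :: "'a set \<Rightarrow> ('a set \<Rightarrow> real) \<Rightarrow> bool" where
  "submodular_set_fun V g \<longleftrightarrow>
     (\<forall>S T. S \<subseteq> V \<longrightarrow> T \<subseteq> V \<longrightarrow> g (S \<inter> T) + g (S \<union> T) \<le> g S + g T)"

definition nonneg_set_fun :: "'a set \<Rightarrow> ('a set \<Rightarrow> real) \<Rightarrow> bool" where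
  "nonneg_set_fun V g \<longleftrightarrow> (\<forall>S. S \<subseteq> V \<longrightarrow> 0 \<le> g S)"

end

theory Submission
  imports Defs "HOL-Library.FuncSet" "HOL-Library.Disjoint_Sets"
begin

text \<open>Both extensions decompose over the blocks: a distribution with marginals x induces on
  each block a distribution with the same marginals, and the product of pairwise independent
  distributions on disjoint blocks is pairwise independent. So it suffices to find on each block a
  pairwise independent distribution \<mu> with marginals x such that 4 E_\<mu>[f] \<ge> 3 E_\<theta>[f] for every
  \<theta> with marginals x. On at most two points the independent distribution does it. On three
  points \<mu> is the independent distribution with the mass of the whole block changed to some t:
  t = x_a x_b x_c if the third-order difference D of f is nonpositive, otherwise the largest value
  keeping \<mu> nonnegative. Then 4 E_\<mu>[f] - 3 E_\<theta>[f] is a nonnegative combination of increments and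
  submodularity gaps of f, with coefficients that are nonnegative by the Frechet bounds on the
  pair and triple probabilities of \<theta>.\<close>

text \<open>Here q plays the role of the probability of the intersection of two events of probabilities
  a and c, so the hypotheses on q are the Frechet lower bound.\<close>

lemma pair_gap_nonneg:
  fixes a c q :: real
  assumes "0 \<le> a" "0 \<le> c" "c \<le> 1" "0 \<le> q" "a + c - 1 \<le> q"
  shows "0 \<le> a + c - 4*a*c + 3*q"
proof (cases "a + c \<le> 1")
  case True
  have "4*a*c \<le> (a + c)^2" using sum_squares_ge_zero[of "a - c" 0]
    by (simp add: power2_eq_square algebra_simps)
  also have "\<dots> \<le> a + c" using True assms by (simp add: power2_eq_square mult_right_le_one_le)
  finally show ?thesis using assms by linarith
next
  case False
  show ?thesis
  proof (cases "1 \<le> a")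
    case True
    then have "0 \<le> (a - 1)*(1 - c)" using assms by simp
    then show ?thesis using assms False by (simp add: algebra_simps)
  next
    case a_lt_1: False
    have "4*(1 - a)*(1 - c) \<le> ((1 - a) + (1 - c))^2"
      using sum_squares_ge_zero[of "a - c" 0] by (simp add: power2_eq_square algebra_simps)
    also have "\<dots> \<le> 1" using a_lt_1 False assms by (simp add: power2_eq_square mult_le_one)
    finally show ?thesis using assms False by (simp add: algebra_simps)
  qed
qed

lemma triple_gap_nonneg:
  fixes x y z q :: real
  assumes "0 \<le> x" "x \<le> 1" "0 \<le> y" "y \<le> 1" "0 \<le> z" "z \<le> 1" "0 \<le> q" "x + y + z - 2 \<le> q"
  shows "0 \<le> x + y + z - 4*x*y*z + 3*q"
proof (cases "x + y + z \<le> 2")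
  case True
  define p where "p = x + y"
  have "4*x*y*z \<le> p^2 * z"
    using sum_squares_ge_zero[of "x - y" 0] assms
    by (intro mult_right_mono) (simp_all add: p_def power2_eq_square algebra_simps)
  also have "\<dots> \<le> p + z"
  proof (cases "p \<le> 1")
    case True
    then have "p^2 \<le> 1" using assms by (simp add: p_def power2_eq_square mult_le_one)
    then have "p^2 * z \<le> z" using assms by (simp add: mult_left_le_one_le)
    then show ?thesis using assms by (simp add: p_def)
  next
    case False
    have "p*(2 - p) \<le> 1" using sum_squares_ge_zero[of "p - 1" 0]
      by (simp add: power2_eq_square algebra_simps)
    then have "p*(p*(2 - p)) \<le> p" using False by (simp add: mult_left_le)
    have "1 \<le> p^2" using False by (simp add: one_le_power)
    then have "(p^2 - 1)*z \<le> (p^2 - 1)*(2 - p)"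
      using \<open>x + y + z \<le> 2\<close> by (intro mult_left_mono) (simp_all add: p_def)
    moreover have "p^2*z = z + (p^2 - 1)*z" "(p^2 - 1)*(2 - p) = p*(p*(2 - p)) - 2 + p"
      by (simp_all add: algebra_simps power2_eq_square)
    ultimately show ?thesis using \<open>p*(p*(2 - p)) \<le> p\<close> \<open>x + y + z \<le> 2\<close> assms by (simp add: p_def)
  qed
  finally show ?thesis using assms p_def by linarith
next
  case False
  define u v w where "u = 1 - x" "v = 1 - y" "w = 1 - z"
  have uvw: "0 \<le> u" "0 \<le> v" "0 \<le> w" "u + v + w \<le> 1" using assms False by (simp_all add: u_v_w_def)
  have "3*(u*v + u*w + v*w) \<le> (u + v + w)^2"
    using sum_squares_ge_zero[of "u - v" "v - w"] sum_squares_ge_zero[of "u - w" 0]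
    by (simp add: power2_eq_square algebra_simps)
  also have "\<dots> \<le> 1" using uvw by (simp add: power2_eq_square mult_le_one)
  finally have "3*(u*v + u*w + v*w) \<le> 1" .
  moreover have "0 \<le> u*v*w" using uvw by simp
  ultimately have "2*(u*v + u*w + v*w) - 2*u*v*w \<le> 1" using uvw by linarith
  then show ?thesis using assms by (simp add: u_v_w_def algebra_simps)
qed

lemma two_point_gap:
  fixes f0 fa fb fab q0 qa qb qab x y :: real
  assumes q: "0 \<le> q0" "0 \<le> qa" "0 \<le> qb" "0 \<le> qab" "q0 + qa + qb + qab = 1"
    and x: "x = qa + qab" and y: "y = qb + qab"
    and f: "0 \<le> f0" "fb \<le> fab" "fa \<le> fab" "f0 + fab \<le> fa + fb"
  shows "q0*f0 + qa*fa + qb*fb + qab*fab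
           \<le> 4/3 * ((1 - x)*(1 - y)*f0 + x*(1 - y)*fa + (1 - x)*y*fb + x*y*fab)"
    (is "?E \<le> 4/3 * ?G")
proof -
  define L where "L = fa + fb - fab - f0"
  have q0: "q0 = 1 - qa - qb - qab" using q(5) by simp
  have "4 * ?G - 3 * ?E = f0 + x*(fab - fb) + y*(fab - fa) + L*(x + y - 4*x*y + 3*qab)"
    unfolding q0 x y L_def by (simp add: algebra_simps)
  moreover have "0 \<le> L*(x + y - 4*x*y + 3*qab)"
    using pair_gap_nonneg[of x y qab] q f unfolding x y L_def by simp
  moreover have "0 \<le> x*(fab - fb)" "0 \<le> y*(fab - fa)" using q f unfolding x y by simp_all
  ultimately have "0 \<le> 4 * ?G - 3 * ?E" using f by linarith
  then show ?thesis by simp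
qed

text \<open>The right-hand side is the expectation under the pairwise independent distribution with
  marginals x, y, z and mass t on the whole block, expanded in the second- and third-order
  differences of f.\<close>

lemma three_point_gap:
  fixes f0 fa fb fc fab fac fbc fabc q0 qa qb qc qab qac qbc qabc x y z t :: real
  assumes q: "0 \<le> q0" "0 \<le> qa" "0 \<le> qb" "0 \<le> qc" "0 \<le> qab" "0 \<le> qac" "0 \<le> qbc" "0 \<le> qabc"
    and q_sum: "q0 + qa + qb + qc + qab + qac + qbc + qabc = 1"
    and x: "x = qa + qab + qac + qabc" and y: "y = qb + qab + qbc + qabc"
    and z: "z = qc + qac + qbc + qabc"
    and f0: "0 \<le> f0"
    and mono: "fbc \<le> fabc" "fac \<le> fabc" "fab \<le> fabc"
    and submod: "f0 + fab \<le> fa + fb" "f0 + fac \<le> fa + fc" "f0 + fbc \<le> fb + fc"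
      "fa + fabc \<le> fab + fac" "fb + fabc \<le> fab + fbc" "fc + fabc \<le> fac + fbc"
    and t: "fabc - fab - fac - fbc + fa + fb + fc - f0 \<le> 0 \<and> t = x*y*z \<or>
      0 \<le> fabc - fab - fac - fbc + fa + fb + fc - f0 \<and>
        (t = x*y \<or> t = x*z \<or> t = y*z \<or> t = 1 - x - y - z + x*y + x*z + y*z)"
  shows "q0*f0 + qa*fa + qb*fb + qc*fc + qab*fab + qac*fac + qbc*fbc + qabc*fabc
    \<le> 4/3 * (f0 + x*(fa - f0) + y*(fb - f0) + z*(fc - f0)
      - x*y*(fa + fb - fab - f0) - x*z*(fa + fc - fac - f0) - y*z*(fb + fc - fbc - f0)
      + t*(fabc - fab - fac - fbc + fa + fb + fc - f0))"
    (is "?E \<le> 4/3 * ?G")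
proof -
  define D Lab Lac Lbc where "D = fabc - fab - fac - fbc + fa + fb + fc - f0"
    and "Lab = fa + fb - fab - f0" and "Lac = fa + fc - fac - f0" and "Lbc = fb + fc - fbc - f0"
  define Pab Pac Pbc where "Pab = qab + qabc" and "Pac = qac + qabc" and "Pbc = qbc + qabc"
  define base where "base = f0 + x*(fabc - fbc) + y*(fabc - fac) + z*(fabc - fab)"
  have q0: "q0 = 1 - qa - qb - qc - qab - qac - qbc - qabc" using q_sum by simp
  have E: "?E = f0 + x*(fa - f0) + y*(fb - f0) + z*(fc - f0) - Pab*Lab - Pac*Lac - Pbc*Lbc + qabc*D"
    unfolding q0 x y z Pab_def Pac_def Pbc_def D_def Lab_def Lac_def Lbc_def
    by (simp add: algebra_simps)
  have xyz: "0 \<le> x" "x \<le> 1" "0 \<le> y" "y \<le> 1" "0 \<le> z" "z \<le> 1" using q q_sum x y z by linarith+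
  have pair_gaps:
    "0 \<le> x + y - 4*x*y + 3*Pab" "0 \<le> x + z - 4*x*z + 3*Pac" "0 \<le> y + z - 4*y*z + 3*Pbc"
    using pair_gap_nonneg[of x y Pab] pair_gap_nonneg[of x z Pac] pair_gap_nonneg[of y z Pbc]
      xyz q q_sum x y z unfolding Pab_def Pac_def Pbc_def by linarith+
  have "0 \<le> base" using xyz mono f0 unfolding base_def by simp
  have L: "0 \<le> Lab" "0 \<le> Lac" "0 \<le> Lbc" "D \<le> Lab" "D \<le> Lac" "D \<le> Lbc"
    using submod unfolding D_def Lab_def Lac_def Lbc_def by linarith+
  show ?thesis
  proof (cases "D \<le> 0 \<and> t = x*y*z")
    case True
    have gap: "4 * ?G - 3 * ?E = base + Lab*(x + y - 4*x*y + 3*Pab) + Lac*(x + z - 4*x*z + 3*Pac)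
        + Lbc*(y + z - 4*y*z + 3*Pbc) + (-D)*(x + y + z - 4*x*y*z + 3*qabc)"
      unfolding E True[THEN conjunct2] base_def
      by (simp add: algebra_simps D_def Lab_def Lac_def Lbc_def)
    moreover have "0 \<le> x + y + z - 4*x*y*z + 3*qabc"
      using triple_gap_nonneg[of x y z qabc] xyz q q_sum x y z by linarith
    then have "0 \<le> (-D)*(x + y + z - 4*x*y*z + 3*qabc)" using True
      by (intro mult_nonneg_nonneg) simp_all
    moreover have "0 \<le> Lab*(x + y - 4*x*y + 3*Pab)" "0 \<le> Lac*(x + z - 4*x*z + 3*Pac)"
      "0 \<le> Lbc*(y + z - 4*y*z + 3*Pbc)" using pair_gaps L by simp_all
    ultimately have "0 \<le> 4 * ?G - 3 * ?E" unfolding gap using \<open>0 \<le> base\<close> by linarith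
    then show ?thesis by simp
  next
    case False
    then have D: "0 \<le> D" and t': "t = x*y \<or> t = x*z \<or> t = y*z \<or> t = 1 - x - y - z + x*y + x*z + y*z"
      using t unfolding D_def by auto
    define Q where "Q = Pab + Pac + Pbc - qabc"
    have Q: "0 \<le> Q" "x + y + z - 1 \<le> Q" using q q_sum x y z unfolding Q_def Pab_def Pac_def Pbc_def
      by linarith+
    have gap: "4 * ?G - 3 * ?E = base + (Lab - D)*(x + y - 4*x*y + 3*Pab)
        + (Lac - D)*(x + z - 4*x*z + 3*Pac)
        + (Lbc - D)*(y + z - 4*y*z + 3*Pbc) + D*(x + y + z - 4*(x*y + x*z + y*z) + 4*t + 3*Q)"
      unfolding E base_def Q_def by (simp add: algebra_simps D_def Lab_def Lac_def Lbc_def)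
    moreover have "0 \<le> x + y + z - 4*(x*y + x*z + y*z) + 4*t + 3*Q"
      using t' pair_gap_nonneg[of "x + y" z Q] pair_gap_nonneg[of "x + z" y Q]
        pair_gap_nonneg[of "y + z" x Q] xyz Q by (auto simp: algebra_simps)
    then have "0 \<le> D*(x + y + z - 4*(x*y + x*z + y*z) + 4*t + 3*Q)" using D by simp
    moreover have "0 \<le> (Lab - D)*(x + y - 4*x*y + 3*Pab)" "0 \<le> (Lac - D)*(x + z - 4*x*z + 3*Pac)"
      "0 \<le> (Lbc - D)*(y + z - 4*y*z + 3*Pbc)" using pair_gaps L by simp_all
    ultimately have "0 \<le> 4 * ?G - 3 * ?E" unfolding gap using \<open>0 \<le> base\<close> by linarith
    then show ?thesis by simp
  qed
qed

definition marginal_dist :: "'a set \<Rightarrow> ('a \<Rightarrow> real) \<Rightarrow> ('a set \<Rightarrow> real) \<Rightarrow> bool" where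
  "marginal_dist B x \<theta> \<longleftrightarrow> (\<forall>A\<in>Pow B. 0 \<le> \<theta> A) \<and> (\<Sum>A\<in>Pow B. \<theta> A) = 1 \<and>
     (\<forall>j\<in>B. (\<Sum>A\<in>{A\<in>Pow B. j \<in> A}. \<theta> A) = x j)"

definition pairwise_indep :: "'a set \<Rightarrow> ('a \<Rightarrow> real) \<Rightarrow> ('a set \<Rightarrow> real) \<Rightarrow> bool" where
  "pairwise_indep B x \<theta> \<longleftrightarrow>
     (\<forall>j\<in>B. \<forall>k\<in>B. j \<noteq> k \<longrightarrow> (\<Sum>A\<in>{A\<in>Pow B. j \<in> A \<and> k \<in> A}. \<theta> A) = x j * x k)"

definition gap_witness :: "'a set \<Rightarrow> ('a \<Rightarrow> real) \<Rightarrow> ('a set \<Rightarrow> real) \<Rightarrow> ('a set \<Rightarrow> real) \<Rightarrow> bool" where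
  "gap_witness B x f \<mu> \<longleftrightarrow> marginal_dist B x \<mu> \<and> pairwise_indep B x \<mu> \<and>
     (\<forall>\<theta>. marginal_dist B x \<theta> \<longrightarrow> (\<Sum>A\<in>Pow B. \<theta> A * f A) \<le> 4/3 * (\<Sum>A\<in>Pow B. \<mu> A * f A))"

lemma Pow_two: "Pow {a,b} = {{}, {a}, {b}, {a,b}}"
  by (auto simp: Pow_insert insert_commute)

lemma Pow_three: "Pow {a,b,c} = {{}, {a}, {b}, {c}, {a,b}, {a,c}, {b,c}, {a,b,c}}"
  by (auto simp: Pow_insert insert_commute)

lemma sum_Pow_one: "(\<Sum>A\<in>Pow {a}. g A) = g {} + g {a}"
  by (simp add: Pow_insert add.commute)

lemma sum_Pow_two:
  assumes "a \<noteq> b"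
  shows "(\<Sum>A\<in>Pow {a,b}. g A) = g {} + g {a} + g {b} + g {a,b}"
  using assms by (simp add: Pow_insert sum.union_disjoint sum.reindex inj_on_def insert_commute
      disjoint_iff image_iff doubleton_eq_iff add.assoc)

lemma sum_Pow_three:
  assumes "a \<noteq> b" "a \<noteq> c" "b \<noteq> c"
  shows "(\<Sum>A\<in>Pow {a,b,c}. g A)
    = g {} + g {a} + g {b} + g {c} + g {a,b} + g {a,c} + g {b,c} + g {a,b,c}"
  using assms by (simp add: Pow_insert sum.union_disjoint sum.reindex inj_on_def insert_commute
      disjoint_iff image_iff doubleton_eq_iff insert_eq_iff add.assoc)

lemma marginal_dist_one:
  "marginal_dist {a} x \<theta> \<longleftrightarrow> 0 \<le> \<theta> {} \<and> 0 \<le> \<theta> {a} \<and> \<theta> {} + \<theta> {a} = 1 \<and> x a = \<theta> {a}"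
  unfolding marginal_dist_def
  by (simp only: sum.inter_filter finite_Pow_iff finite.intros) (auto simp: sum_Pow_one Pow_insert)

lemma marginal_dist_two:
  assumes "a \<noteq> b"
  shows "marginal_dist {a,b} x \<theta> \<longleftrightarrow>
    0 \<le> \<theta> {} \<and> 0 \<le> \<theta> {a} \<and> 0 \<le> \<theta> {b} \<and> 0 \<le> \<theta> {a,b} \<and>
    \<theta> {} + \<theta> {a} + \<theta> {b} + \<theta> {a,b} = 1 \<and> x a = \<theta> {a} + \<theta> {a,b} \<and> x b = \<theta> {b} + \<theta> {a,b}"
proof -
  have "(\<forall>A\<in>Pow {a,b}. 0 \<le> \<theta> A) \<longleftrightarrow> 0 \<le> \<theta> {} \<and> 0 \<le> \<theta> {a} \<and> 0 \<le> \<theta> {b} \<and> 0 \<le> \<theta> {a,b}"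
    by (simp add: Pow_two)
  then show ?thesis unfolding marginal_dist_def using assms
    by (simp only: sum.inter_filter finite_Pow_iff finite.intros) (auto simp: sum_Pow_two)
qed

lemma marginal_dist_three:
  assumes "a \<noteq> b" "a \<noteq> c" "b \<noteq> c"
  shows "marginal_dist {a,b,c} x \<theta> \<longleftrightarrow>
    0 \<le> \<theta> {} \<and> 0 \<le> \<theta> {a} \<and> 0 \<le> \<theta> {b} \<and> 0 \<le> \<theta> {c} \<and>
    0 \<le> \<theta> {a,b} \<and> 0 \<le> \<theta> {a,c} \<and> 0 \<le> \<theta> {b,c} \<and> 0 \<le> \<theta> {a,b,c} \<and>
    \<theta> {} + \<theta> {a} + \<theta> {b} + \<theta> {c} + \<theta> {a,b} + \<theta> {a,c} + \<theta> {b,c} + \<theta> {a,b,c} = 1 \<and>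
    x a = \<theta> {a} + \<theta> {a,b} + \<theta> {a,c} + \<theta> {a,b,c} \<and>
    x b = \<theta> {b} + \<theta> {a,b} + \<theta> {b,c} + \<theta> {a,b,c} \<and>
    x c = \<theta> {c} + \<theta> {a,c} + \<theta> {b,c} + \<theta> {a,b,c}"
proof -
  have "(\<forall>A\<in>Pow {a,b,c}. 0 \<le> \<theta> A) \<longleftrightarrow> 0 \<le> \<theta> {} \<and> 0 \<le> \<theta> {a} \<and> 0 \<le> \<theta> {b} \<and> 0 \<le> \<theta> {c} \<and>
      0 \<le> \<theta> {a,b} \<and> 0 \<le> \<theta> {a,c} \<and> 0 \<le> \<theta> {b,c} \<and> 0 \<le> \<theta> {a,b,c}"
    by (simp add: Pow_three)
  then show ?thesis unfolding marginal_dist_def using assms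
    by (simp only: sum.inter_filter finite_Pow_iff finite.intros) (auto simp: sum_Pow_three)
qed

lemma pairwise_indep_two:
  assumes "a \<noteq> b"
  shows "pairwise_indep {a,b} x \<theta> \<longleftrightarrow> \<theta> {a,b} = x a * x b"
  unfolding pairwise_indep_def using assms
  by (simp only: sum.inter_filter finite_Pow_iff finite.intros) (auto simp: sum_Pow_two
    mult.commute)

lemma pairwise_indep_three:
  assumes "a \<noteq> b" "a \<noteq> c" "b \<noteq> c"
  shows "pairwise_indep {a,b,c} x \<theta> \<longleftrightarrow> \<theta> {a,b} + \<theta> {a,b,c} = x a * x b \<and>
    \<theta> {a,c} + \<theta> {a,b,c} = x a * x c \<and> \<theta> {b,c} + \<theta> {a,b,c} = x b * x c"
  unfolding pairwise_indep_def using assms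
  by (simp only: sum.inter_filter finite_Pow_iff finite.intros) (auto simp: sum_Pow_three
    mult.commute)

section \<open>Blocks of at most three elements\<close>

lemma monotone_set_funD:
  "monotone_set_fun V g \<Longrightarrow> S \<subseteq> T \<Longrightarrow> T \<subseteq> V \<Longrightarrow> g S \<le> g T"
  unfolding monotone_set_fun_def by blast

lemma submodular_set_funD:
  "submodular_set_fun V g \<Longrightarrow> S \<subseteq> V \<Longrightarrow> T \<subseteq> V \<Longrightarrow> S \<inter> T = I \<Longrightarrow> S \<union> T = U \<Longrightarrow>
    g I + g U \<le> g S + g T"
  unfolding submodular_set_fun_def by blast

definition indep_dist :: "'a set \<Rightarrow> ('a \<Rightarrow> real) \<Rightarrow> 'a set \<Rightarrow> real" where
  "indep_dist B x A = (\<Prod>j\<in>A. x j) * (\<Prod>j\<in>B - A. 1 - x j)"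

lemma gap_witness_one:
  assumes "0 \<le> x a" "x a \<le> 1" "nonneg_set_fun {a} f"
  shows "gap_witness {a} x f (indep_dist {a} x)"
proof -
  let ?\<mu> = "indep_dist {a} x"
  have \<mu>: "?\<mu> {} = 1 - x a" "?\<mu> {a} = x a" by (simp_all add: indep_dist_def)
  have "0 \<le> f {}" "0 \<le> f {a}" using assms(3) by (simp_all add: nonneg_set_fun_def)
  then have "0 \<le> (\<Sum>A\<in>Pow {a}. ?\<mu> A * f A)" using assms(1,2) by (simp add: sum_Pow_one \<mu>)
  moreover have "marginal_dist {a} x \<theta> \<longleftrightarrow> (\<forall>A\<in>Pow {a}. \<theta> A = ?\<mu> A)" for \<theta>
    using assms(1,2) by (auto simp: marginal_dist_one Pow_insert \<mu>)
  ultimately show ?thesis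
    by (auto simp: gap_witness_def pairwise_indep_def intro: sum.cong)
qed

lemma gap_witness_two:
  assumes ab: "a \<noteq> b" and x: "\<forall>j\<in>{a,b}. 0 \<le> x j \<and> x j \<le> 1"
    and f: "nonneg_set_fun {a,b} f" "monotone_set_fun {a,b} f" "submodular_set_fun {a,b} f"
  shows "gap_witness {a,b} x f (indep_dist {a,b} x)"
proof -
  let ?\<mu> = "indep_dist {a,b} x"
  have \<mu>: "?\<mu> {} = (1 - x a)*(1 - x b)" "?\<mu> {a} = x a*(1 - x b)" "?\<mu> {b} = (1 - x a)*x b"
    "?\<mu> {a,b} = x a*x b"
    using ab by (simp_all add: indep_dist_def insert_Diff_if)
  have "0 \<le> (1 - x a)*(1 - x b)" "0 \<le> x a*(1 - x b)" "0 \<le> (1 - x a)*x b" "0 \<le> x a*x b"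
    using x by simp_all
  then have "marginal_dist {a,b} x ?\<mu>" by (simp add: marginal_dist_two[OF ab] \<mu> algebra_simps)
  moreover have "pairwise_indep {a,b} x ?\<mu>" by (simp add: pairwise_indep_two[OF ab] \<mu>)
  moreover have "(\<Sum>A\<in>Pow {a,b}. \<theta> A * f A) \<le> 4/3 * (\<Sum>A\<in>Pow {a,b}. ?\<mu> A * f A)"
    if "marginal_dist {a,b} x \<theta>" for \<theta>
  proof -
    have "f {} + f {a,b} \<le> f {a} + f {b}" by (rule submodular_set_funD[OF f(3)]) (use ab in auto)
    moreover have "f {b} \<le> f {a,b}" "f {a} \<le> f {a,b}" by (auto intro: monotone_set_funD[OF f(2)])
    moreover have "0 \<le> f {}" using f(1) by (simp add: nonneg_set_fun_def)
    ultimately show ?thesis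
      using that two_point_gap[of "\<theta> {}" "\<theta> {a}" "\<theta> {b}" "\<theta> {a,b}" "x a" "x b"
          "f {}" "f {b}" "f {a,b}" "f {a}"]
      by (auto simp: marginal_dist_two[OF ab] sum_Pow_two[OF ab] \<mu>)
  qed
  ultimately show ?thesis unfolding gap_witness_def by blast
qed

text \<open>Adding a multiple of (-1)^|B - A| leaves all marginals of order at most two unchanged.\<close>

definition triple_dist :: "'a \<Rightarrow> 'a \<Rightarrow> 'a \<Rightarrow> ('a \<Rightarrow> real) \<Rightarrow> real \<Rightarrow> 'a set \<Rightarrow> real" where
  "triple_dist a b c x t A =
     indep_dist {a,b,c} x A + (t - x a * x b * x c) * (-1) ^ card ({a,b,c} - A)"

lemma triple_dist_simps:
  assumes "a \<noteq> b" "a \<noteq> c" "b \<noteq> c"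
  shows "triple_dist a b c x t {} = 1 - x a - x b - x c + x a * x b + x a * x c + x b * x c - t"
    "triple_dist a b c x t {a} = x a - x a * x b - x a * x c + t"
    "triple_dist a b c x t {b} = x b - x a * x b - x b * x c + t"
    "triple_dist a b c x t {c} = x c - x a * x c - x b * x c + t"
    "triple_dist a b c x t {a,b} = x a * x b - t" "triple_dist a b c x t {a,c} = x a * x c - t"
    "triple_dist a b c x t {b,c} = x b * x c - t" "triple_dist a b c x t {a,b,c} = t"
  using assms by (simp_all add: triple_dist_def indep_dist_def insert_Diff_if algebra_simps)

lemma pairwise_indep_triple_dist:
  assumes "a \<noteq> b" "a \<noteq> c" "b \<noteq> c"
  shows "pairwise_indep {a,b,c} x (triple_dist a b c x t)"
  by (simp add: pairwise_indep_three[OF assms] triple_dist_simps[OF assms])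

lemma marginal_dist_triple_dist:
  assumes abc: "a \<noteq> b" "a \<noteq> c" "b \<noteq> c" and x: "\<forall>j\<in>{a,b,c}. 0 \<le> x j \<and> x j \<le> 1"
    and t: "x a * x b * x c \<le> t" "t \<le> x a * x b" "t \<le> x a * x c" "t \<le> x b * x c"
      "t \<le> 1 - x a - x b - x c + x a * x b + x a * x c + x b * x c"
  shows "marginal_dist {a,b,c} x (triple_dist a b c x t)"
proof -
  have "0 \<le> x a * (1 - x b) * (1 - x c)" "0 \<le> x b * (1 - x a) * (1 - x c)"
    "0 \<le> x c * (1 - x a) * (1 - x b)" "0 \<le> x a * x b * x c"
    using x by simp_all
  then show ?thesis using t
    by (simp add: marginal_dist_three[OF abc] triple_dist_simps[OF abc] algebra_simps)
qed

lemma gap_witness_three: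
  assumes abc: "a \<noteq> b" "a \<noteq> c" "b \<noteq> c" and x: "\<forall>j\<in>{a,b,c}. 0 \<le> x j \<and> x j \<le> 1"
    and f: "nonneg_set_fun {a,b,c} f" "monotone_set_fun {a,b,c} f" "submodular_set_fun {a,b,c} f"
  shows "\<exists>\<mu>. gap_witness {a,b,c} x f \<mu>"
proof -
  define D where "D = f {a,b,c} - f {a,b} - f {a,c} - f {b,c} + f {a} + f {b} + f {c} - f {}"
  define r where "r = 1 - x a - x b - x c + x a * x b + x a * x c + x b * x c"
  define t where "t = (if D \<le> 0 then x a * x b * x c else Min {x a * x b, x a * x c, x b * x c, r})"
  have "x c * (x a * x b) \<le> x a * x b" "x b * (x a * x c) \<le> x a * x c"
    "x a * (x b * x c) \<le> x b * x c"
    "0 \<le> (1 - x a) * (1 - x b) * (1 - x c)"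
    using x by (simp_all add: mult_left_le_one_le)
  then have "x a * x b * x c \<le> t" "t \<le> x a * x b" "t \<le> x a * x c" "t \<le> x b * x c" "t \<le> r"
    by (auto simp: t_def r_def algebra_simps)
  then have marg: "marginal_dist {a,b,c} x (triple_dist a b c x t)"
    using marginal_dist_triple_dist[OF abc x] by (simp add: r_def)
  have t: "D \<le> 0 \<and> t = x a * x b * x c \<or>
      0 \<le> D \<and> (t = x a * x b \<or> t = x a * x c \<or> t = x b * x c \<or> t = r)"
  proof (cases "D \<le> 0")
    case False
    have "Min {x a * x b, x a * x c, x b * x c, r} \<in> {x a * x b, x a * x c, x b * x c, r}"
      by (rule Min_in) auto
    then show ?thesis using False by (auto simp: t_def)
  qed (simp add: t_def)
  have "f {} + f {a,b} \<le> f {a} + f {b}" "f {} + f {a,c} \<le> f {a} + f {c}"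
    "f {} + f {b,c} \<le> f {b} + f {c}"
    "f {a} + f {a,b,c} \<le> f {a,b} + f {a,c}" "f {b} + f {a,b,c} \<le> f {a,b} + f {b,c}"
    "f {c} + f {a,b,c} \<le> f {a,c} + f {b,c}"
    by (rule submodular_set_funD[OF f(3)]; use abc in auto)+
  moreover have "f {b,c} \<le> f {a,b,c}" "f {a,c} \<le> f {a,b,c}" "f {a,b} \<le> f {a,b,c}"
    by (auto intro: monotone_set_funD[OF f(2)])
  moreover have "0 \<le> f {}" using f(1) by (simp add: nonneg_set_fun_def)
  ultimately have "(\<Sum>A\<in>Pow {a,b,c}. \<theta> A * f A)
      \<le> 4/3 * (\<Sum>A\<in>Pow {a,b,c}. triple_dist a b c x t A * f A)"
    if "marginal_dist {a,b,c} x \<theta>" for \<theta>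
    using that t three_point_gap[of "\<theta> {}" "\<theta> {a}" "\<theta> {b}" "\<theta> {c}" "\<theta> {a,b}" "\<theta> {a,c}" "\<theta> {b,c}"
        "\<theta> {a,b,c}" "x a" "x b" "x c" "f {}" "f {b,c}" "f {a,b,c}" "f {a,c}" "f {a,b}" "f {a}"
        "f {b}" "f {c}" t]
    unfolding D_def r_def
    by (auto simp: marginal_dist_three[OF abc] sum_Pow_three[OF abc] triple_dist_simps[OF abc]
      algebra_simps)
  then show ?thesis
    using marg pairwise_indep_triple_dist[OF abc] unfolding gap_witness_def by blast
qed

lemma gap_witness_small_block:
  assumes "card B \<in> {1,2,3}" and x: "\<forall>j\<in>B. 0 \<le> x j \<and> x j \<le> 1"
    and f: "nonneg_set_fun B f" "monotone_set_fun B f" "submodular_set_fun B f"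
  shows "\<exists>\<mu>. gap_witness B x f \<mu>"
proof -
  from assms(1) consider "card B = 1" | "card B = 2" | "card B = 3" by auto
  then show ?thesis
  proof cases
    case 1
    then obtain a where B: "B = {a}" by (auto simp: card_1_singleton_iff)
    have "gap_witness {a} x f (indep_dist {a} x)" using x f by (intro gap_witness_one) (auto simp: B)
    then show ?thesis unfolding B by blast
  next
    case 2
    then obtain a b where B: "B = {a,b}" "a \<noteq> b" by (auto simp: card_2_iff)
    have "gap_witness {a,b} x f (indep_dist {a,b} x)" using x f by (intro gap_witness_two) (auto simp: B)
    then show ?thesis unfolding B(1) by blast
  next
    case 3
    then obtain a b c where B: "B = {a,b,c}" "a \<noteq> b" "a \<noteq> c" "b \<noteq> c" by (auto simp: card_3_iff)
    then show ?thesis using gap_witness_three x f by simp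
  qed
qed

section \<open>Products over disjoint blocks\<close>

lemma sum_Pow_UN_prod:
  fixes h :: "'i \<Rightarrow> 'a set \<Rightarrow> 'b::comm_semiring_1"
  assumes I: "finite I" and B: "\<And>i. i \<in> I \<Longrightarrow> finite (B i)" and disj: "disjoint_family_on B I"
  shows "(\<Sum>S\<in>Pow (\<Union>i\<in>I. B i). \<Prod>i\<in>I. h i (S \<inter> B i)) = (\<Prod>i\<in>I. \<Sum>A\<in>Pow (B i). h i A)"
proof -
  let ?P = "PiE I (\<lambda>i. Pow (B i))"
  have Int_block: "(\<Union>j\<in>I. g j) \<inter> B i = g i" if "g \<in> ?P" "i \<in> I" for g i
    using that disj by (fastforce simp: PiE_def Pi_def disjoint_family_on_def)
  have "bij_betw (\<lambda>g. \<Union>j\<in>I. g j) ?P (Pow (\<Union>i\<in>I. B i))"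
  proof (rule bij_betw_byWitness[where f' = "\<lambda>S. restrict (\<lambda>i. S \<inter> B i) I"])
    show "\<forall>g\<in>?P. restrict (\<lambda>i. (\<Union>j\<in>I. g j) \<inter> B i) I = g"
      using Int_block by (metis PiE_restrict restrict_ext)
  qed (auto simp: PiE_def Pi_def)
  then have "(\<Sum>S\<in>Pow (\<Union>i\<in>I. B i). \<Prod>i\<in>I. h i (S \<inter> B i))
      = (\<Sum>g\<in>?P. \<Prod>i\<in>I. h i ((\<Union>j\<in>I. g j) \<inter> B i))"
    by (rule sum.reindex_bij_betw[symmetric])
  also have "\<dots> = (\<Sum>g\<in>?P. \<Prod>i\<in>I. h i (g i))"
    using Int_block by (intro sum.cong prod.cong) auto
  also have "\<dots> = (\<Prod>i\<in>I. \<Sum>A\<in>Pow (B i). h i A)"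
    using I B by (intro prod_sum_PiE[symmetric]) auto
  finally show ?thesis .
qed

definition prod_dist :: "'i set \<Rightarrow> ('i \<Rightarrow> 'a set) \<Rightarrow> ('i \<Rightarrow> 'a set \<Rightarrow> real) \<Rightarrow> 'a set \<Rightarrow> real" where
  "prod_dist I B \<mu> S = (\<Prod>i\<in>I. \<mu> i (S \<inter> B i))"

lemma sum_Pow_filter:
  fixes \<theta> :: "'a set \<Rightarrow> 'b::semiring_1"
  shows "finite B \<Longrightarrow> (\<Sum>A\<in>{A\<in>Pow B. P A}. \<theta> A) = (\<Sum>A\<in>Pow B. \<theta> A * of_bool (P A))"
  by (simp only: sum.inter_filter finite_Pow_iff) (rule sum.cong; simp)

definition block_marginal :: "'a set \<Rightarrow> 'a set \<Rightarrow> ('a set \<Rightarrow> real) \<Rightarrow> 'a set \<Rightarrow> real" where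
  "block_marginal V B \<theta> A = (\<Sum>S\<in>{S\<in>Pow V. S \<inter> B = A}. \<theta> S)"

lemma sum_Pow_block_marginal:
  assumes "finite V" "B \<subseteq> V"
  shows "(\<Sum>S\<in>Pow V. \<theta> S * g (S \<inter> B)) = (\<Sum>A\<in>Pow B. block_marginal V B \<theta> A * g A)"
proof -
  have "(\<Sum>S\<in>Pow V. \<theta> S * g (S \<inter> B)) = (\<Sum>A\<in>Pow B. \<Sum>S\<in>{S\<in>Pow V. S \<inter> B = A}. \<theta> S * g (S \<inter> B))"
    using assms by (intro sum.group[symmetric]) (auto intro: finite_subset)
  also have "\<dots> = (\<Sum>A\<in>Pow B. block_marginal V B \<theta> A * g A)"
    unfolding block_marginal_def sum_distrib_right by (intro sum.cong) auto
  finally show ?thesis .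
qed

lemma marginal_dist_block_marginal:
  assumes V: "finite V" "B \<subseteq> V" and \<theta>: "marginal_dist V x \<theta>"
  shows "marginal_dist B x (block_marginal V B \<theta>)"
proof -
  have B: "finite B" using V finite_subset by blast
  have "(\<Sum>A\<in>Pow B. block_marginal V B \<theta> A) = 1"
    using sum_Pow_block_marginal[OF V, of \<theta> "\<lambda>_. 1"] \<theta> by (simp add: marginal_dist_def)
  moreover have "(\<Sum>A\<in>{A\<in>Pow B. j \<in> A}. block_marginal V B \<theta> A) = x j" if "j \<in> B" for j
  proof -
    have "(\<Sum>A\<in>{A\<in>Pow B. j \<in> A}. block_marginal V B \<theta> A) = (\<Sum>S\<in>Pow V. \<theta> S * of_bool (j \<in> S \<inter> B))"
      unfolding sum_Pow_filter[OF B] using sum_Pow_block_marginal[OF V, of \<theta> "\<lambda>A. of_bool (j \<in> A)"]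
      by simp
    also have "\<dots> = x j"
      using \<theta> that V unfolding marginal_dist_def sum_Pow_filter[OF V(1)] by auto
    finally show ?thesis .
  qed
  moreover have "0 \<le> block_marginal V B \<theta> A" for A
    using \<theta> unfolding block_marginal_def marginal_dist_def by (auto intro: sum_nonneg)
  ultimately show ?thesis unfolding marginal_dist_def by blast
qed

context
  fixes I :: "'i set" and B :: "'i \<Rightarrow> 'a set"
  assumes I: "finite I" and B: "\<And>i. i \<in> I \<Longrightarrow> finite (B i)" and disj: "disjoint_family_on B I"
begin

lemma sum_prod_dist:
  "(\<Sum>S\<in>Pow (\<Union>i\<in>I. B i). (\<Prod>i\<in>I. w i (S \<inter> B i)) * prod_dist I B \<mu> S)
    = (\<Prod>i\<in>I. \<Sum>A\<in>Pow (B i). w i A * \<mu> i A)"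
  unfolding prod_dist_def prod.distrib[symmetric] by (rule sum_Pow_UN_prod[OF I B disj])

lemma sum_prod_dist_block:
  assumes "i0 \<in> I" and \<mu>: "\<And>i. i \<in> I \<Longrightarrow> (\<Sum>A\<in>Pow (B i). \<mu> i A) = 1"
  shows "(\<Sum>S\<in>Pow (\<Union>i\<in>I. B i). g (S \<inter> B i0) * prod_dist I B \<mu> S) = (\<Sum>A\<in>Pow (B i0). g A * \<mu> i0 A)"
proof -
  let ?w = "\<lambda>i. if i = i0 then g else (\<lambda>_. 1)"
  have "(\<Sum>S\<in>Pow (\<Union>i\<in>I. B i). g (S \<inter> B i0) * prod_dist I B \<mu> S)
      = (\<Sum>S\<in>Pow (\<Union>i\<in>I. B i). (\<Prod>i\<in>I. ?w i (S \<inter> B i)) * prod_dist I B \<mu> S)"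
    using I \<open>i0 \<in> I\<close> by (simp add: if_distrib[of "\<lambda>h. h _"])
  also have "\<dots> = (\<Prod>i\<in>I. \<Sum>A\<in>Pow (B i). ?w i A * \<mu> i A)" by (rule sum_prod_dist)
  also have "\<dots> = (\<Prod>i\<in>I. if i = i0 then (\<Sum>A\<in>Pow (B i0). g A * \<mu> i0 A) else 1)"
    using \<mu> by (intro prod.cong) auto
  also have "\<dots> = (\<Sum>A\<in>Pow (B i0). g A * \<mu> i0 A)" using I \<open>i0 \<in> I\<close> by simp
  finally show ?thesis .
qed

lemma sum_prod_dist_two_blocks:
  assumes "i0 \<in> I" "i1 \<in> I" "i0 \<noteq> i1" and \<mu>: "\<And>i. i \<in> I \<Longrightarrow> (\<Sum>A\<in>Pow (B i). \<mu> i A) = 1"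
  shows "(\<Sum>S\<in>Pow (\<Union>i\<in>I. B i). g (S \<inter> B i0) * h (S \<inter> B i1) * prod_dist I B \<mu> S)
    = (\<Sum>A\<in>Pow (B i0). g A * \<mu> i0 A) * (\<Sum>A\<in>Pow (B i1). h A * \<mu> i1 A)"
proof -
  let ?w = "\<lambda>i. if i = i0 then g else if i = i1 then h else (\<lambda>_. 1)"
  have "(\<Sum>S\<in>Pow (\<Union>i\<in>I. B i). g (S \<inter> B i0) * h (S \<inter> B i1) * prod_dist I B \<mu> S)
      = (\<Sum>S\<in>Pow (\<Union>i\<in>I. B i). (\<Prod>i\<in>I. ?w i (S \<inter> B i)) * prod_dist I B \<mu> S)"
    using I assms(1-3) by (simp add: if_distrib[of "\<lambda>h. h _"] prod.If_cases Int_absorb1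
      Diff_Int_distrib2)
  also have "\<dots> = (\<Prod>i\<in>I. \<Sum>A\<in>Pow (B i). ?w i A * \<mu> i A)" by (rule sum_prod_dist)
  also have "\<dots> = (\<Prod>i\<in>I. (if i = i0 then (\<Sum>A\<in>Pow (B i0). g A * \<mu> i0 A) else 1) *
      (if i = i1 then (\<Sum>A\<in>Pow (B i1). h A * \<mu> i1 A) else 1))"
    using \<mu> assms(3) by (intro prod.cong) auto
  also have "\<dots> = (\<Sum>A\<in>Pow (B i0). g A * \<mu> i0 A) * (\<Sum>A\<in>Pow (B i1). h A * \<mu> i1 A)"
    using I assms(1,2) by (simp add: prod.distrib)
  finally show ?thesis .
qed

lemma finite_UN_blocks: "finite (\<Union>i\<in>I. B i)"
  using I B by blast

lemma marginal_dist_prod_dist: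
  assumes \<mu>: "\<And>i. i \<in> I \<Longrightarrow> marginal_dist (B i) x (\<mu> i)"
  shows "marginal_dist (\<Union>i\<in>I. B i) x (prod_dist I B \<mu>)"
proof -
  have \<mu>1: "\<And>i. i \<in> I \<Longrightarrow> (\<Sum>A\<in>Pow (B i). \<mu> i A) = 1" using \<mu> by (simp add: marginal_dist_def)
  have "(\<Sum>S\<in>{S\<in>Pow (\<Union>i\<in>I. B i). j \<in> S}. prod_dist I B \<mu> S) = x j" if "i0 \<in> I" "j \<in> B i0" for i0 j
  proof -
    have "(\<Sum>S\<in>{S\<in>Pow (\<Union>i\<in>I. B i). j \<in> S}. prod_dist I B \<mu> S)
        = (\<Sum>S\<in>Pow (\<Union>i\<in>I. B i). of_bool (j \<in> S \<inter> B i0) * prod_dist I B \<mu> S)"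
      unfolding sum_Pow_filter[OF finite_UN_blocks] using that by (intro sum.cong) auto
    also have "\<dots> = (\<Sum>A\<in>Pow (B i0). of_bool (j \<in> A) * \<mu> i0 A)"
      by (rule sum_prod_dist_block[OF that(1) \<mu>1])
    also have "\<dots> = x j"
      using \<mu>[OF that(1)] that(2) unfolding marginal_dist_def sum_Pow_filter[OF B[OF that(1)]]
      by (simp add: mult.commute)
    finally show ?thesis .
  qed
  moreover have "(\<Sum>S\<in>Pow (\<Union>i\<in>I. B i). prod_dist I B \<mu> S) = 1"
    using sum_prod_dist[of "\<lambda>_ _. 1" \<mu>] \<mu>1 by simp
  moreover have "0 \<le> prod_dist I B \<mu> S" if "S \<subseteq> (\<Union>i\<in>I. B i)" for S
    using \<mu> unfolding prod_dist_def marginal_dist_def by (auto intro!: prod_nonneg)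
  ultimately show ?thesis unfolding marginal_dist_def by blast
qed

lemma pairwise_indep_prod_dist:
  assumes \<mu>: "\<And>i. i \<in> I \<Longrightarrow> marginal_dist (B i) x (\<mu> i)" "\<And>i. i \<in> I \<Longrightarrow> pairwise_indep (B i) x (\<mu> i)"
  shows "pairwise_indep (\<Union>i\<in>I. B i) x (prod_dist I B \<mu>)"
  unfolding pairwise_indep_def
proof (intro ballI impI)
  fix j k assume "j \<in> (\<Union>i\<in>I. B i)" "k \<in> (\<Union>i\<in>I. B i)" "j \<noteq> k"
  then obtain i0 i1 where i: "i0 \<in> I" "j \<in> B i0" "i1 \<in> I" "k \<in> B i1" by blast
  have \<mu>1: "\<And>i. i \<in> I \<Longrightarrow> (\<Sum>A\<in>Pow (B i). \<mu> i A) = 1" using \<mu>(1) by (simp add: marginal_dist_def)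
  have marg: "(\<Sum>A\<in>Pow (B i). of_bool (j \<in> A) * \<mu> i A) = x j" if "i \<in> I" "j \<in> B i" for i j
    using \<mu>(1)[OF that(1)] that(2) unfolding marginal_dist_def sum_Pow_filter[OF B[OF that(1)]]
    by (simp add: mult.commute)
  have "(\<Sum>S\<in>{S\<in>Pow (\<Union>i\<in>I. B i). j \<in> S \<and> k \<in> S}. prod_dist I B \<mu> S)
      = (\<Sum>S\<in>Pow (\<Union>i\<in>I. B i). of_bool (j \<in> S \<inter> B i0) * of_bool (k \<in> S \<inter> B i1) * prod_dist I B \<mu> S)"
    unfolding sum_Pow_filter[OF finite_UN_blocks] using i by (intro sum.cong) auto
  also have "\<dots> = x j * x k"
  proof (cases "i0 = i1")
    case True
    have "(\<Sum>A\<in>Pow (B i0). of_bool (j \<in> A \<and> k \<in> A) * \<mu> i0 A) = x j * x k"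
      using \<mu>(2)[OF i(1)] i True \<open>j \<noteq> k\<close> unfolding pairwise_indep_def sum_Pow_filter[OF B[OF i(1)]]
      by (simp add: mult.commute)
    then show ?thesis
      using sum_prod_dist_block[OF i(1) \<mu>1, of "\<lambda>A. of_bool (j \<in> A \<and> k \<in> A)"] True
      by (simp add: of_bool_conj mult.assoc)
  next
    case False
    then show ?thesis
      using sum_prod_dist_two_blocks[OF i(1,3) False \<mu>1,
          of "\<lambda>A. of_bool (j \<in> A)" "\<lambda>A. of_bool (k \<in> A)"]
        marg i by simp
  qed
  finally show "(\<Sum>S\<in>{S\<in>Pow (\<Union>i\<in>I. B i). j \<in> S \<and> k \<in> S}. prod_dist I B \<mu> S) = x j * x k" .
qed

lemma gap_witness_prod_dist:
  assumes \<mu>: "\<And>i. i \<in> I \<Longrightarrow> gap_witness (B i) x (f i) (\<mu> i)"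
  shows "gap_witness (\<Union>i\<in>I. B i) x (\<lambda>S. \<Sum>i\<in>I. f i (S \<inter> B i)) (prod_dist I B \<mu>)"
proof -
  let ?V = "\<Union>i\<in>I. B i"
  have marg: "\<And>i. i \<in> I \<Longrightarrow> marginal_dist (B i) x (\<mu> i)" using \<mu> by (simp add: gap_witness_def)
  then have \<mu>1: "\<And>i. i \<in> I \<Longrightarrow> (\<Sum>A\<in>Pow (B i). \<mu> i A) = 1" by (simp add: marginal_dist_def)
  have "(\<Sum>S\<in>Pow ?V. \<theta> S * (\<Sum>i\<in>I. f i (S \<inter> B i)))
      \<le> 4/3 * (\<Sum>S\<in>Pow ?V. prod_dist I B \<mu> S * (\<Sum>i\<in>I. f i (S \<inter> B i)))"
    if \<theta>: "marginal_dist ?V x \<theta>" for \<theta>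
  proof -
    have "(\<Sum>S\<in>Pow ?V. \<theta> S * (\<Sum>i\<in>I. f i (S \<inter> B i)))
        = (\<Sum>i\<in>I. \<Sum>A\<in>Pow (B i). block_marginal ?V (B i) \<theta> A * f i A)"
      by (simp add: sum_distrib_left sum.swap[of _ I] sum_Pow_block_marginal[OF finite_UN_blocks]
        UN_upper)
    also have "\<dots> \<le> (\<Sum>i\<in>I. 4/3 * (\<Sum>A\<in>Pow (B i). \<mu> i A * f i A))"
      using \<mu> marginal_dist_block_marginal[OF finite_UN_blocks _ \<theta>]
      by (intro sum_mono) (auto simp: gap_witness_def)
    also have "\<dots> = 4/3 * (\<Sum>i\<in>I. \<Sum>A\<in>Pow (B i). f i A * \<mu> i A)"
      by (simp add: sum_distrib_left mult.commute)
    also have "\<dots> = 4/3 * (\<Sum>i\<in>I. \<Sum>S\<in>Pow ?V. f i (S \<inter> B i) * prod_dist I B \<mu> S)"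
      by (simp add: sum_prod_dist_block[OF _ \<mu>1] cong: sum.cong)
    also have "\<dots> = 4/3 * (\<Sum>S\<in>Pow ?V. prod_dist I B \<mu> S * (\<Sum>i\<in>I. f i (S \<inter> B i)))"
      by (simp add: sum_distrib_left sum.swap[of _ I] mult.commute)
    finally show ?thesis .
  qed
  then show ?thesis
    using marg \<mu> by (simp add: gap_witness_def marginal_dist_prod_dist pairwise_indep_prod_dist)
qed

end

lemma bdd_above_expectations:
  assumes "finite V"
  shows "bdd_above {(\<Sum>S\<in>Pow V. \<theta> S * f S) | \<theta>. marginal_dist V x \<theta>}"
proof (rule bdd_aboveI)
  fix v assume "v \<in> {(\<Sum>S\<in>Pow V. \<theta> S * f S) | \<theta>. marginal_dist V x \<theta>}"
  then obtain \<theta> where v: "v = (\<Sum>S\<in>Pow V. \<theta> S * f S)" and \<theta>: "marginal_dist V x \<theta>" by blast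
  have "\<theta> S * f S \<le> \<bar>f S\<bar>" if "S \<in> Pow V" for S
  proof -
    have "\<theta> S \<le> (\<Sum>S\<in>Pow V. \<theta> S)"
      using \<theta> that assms by (intro member_le_sum) (auto simp: marginal_dist_def)
    then have "\<theta> S \<le> 1" using \<theta> by (simp add: marginal_dist_def)
    have "0 \<le> \<theta> S" using \<theta> that by (simp add: marginal_dist_def)
    then have "\<theta> S * f S \<le> \<theta> S * \<bar>f S\<bar>" by (simp add: mult_left_mono)
    also have "\<dots> \<le> \<bar>f S\<bar>" using \<open>0 \<le> \<theta> S\<close> \<open>\<theta> S \<le> 1\<close> by (simp add: mult_left_le_one_le)
    finally show ?thesis .
  qed
  then show "v \<le> (\<Sum>S\<in>Pow V. \<bar>f S\<bar>)" unfolding v by (rule sum_mono)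
qed

lemma concave_closure_le_upper_pi_ext:
  assumes \<mu>: "gap_witness {1..n} x f \<mu>"
  shows "concave_closure n f x \<le> 4/3 * upper_pi_ext n f x"
proof -
  let ?E = "\<lambda>\<theta>. \<Sum>S\<in>Pow {1..n}. \<theta> S * f S"
  let ?C = "{?E \<theta> | \<theta>. is_distribution n \<theta> \<and> marginals_ok n x \<theta>}"
  let ?P = "{?E \<theta> | \<theta>. is_distribution n \<theta> \<and> marginals_ok n x \<theta> \<and> pairwise_ok n x \<theta>}"
  have marginal: "marginal_dist {1..n} x \<theta>" if "is_distribution n \<theta>" "marginals_ok n x \<theta>" for \<theta>
    using that by (simp add: marginal_dist_def is_distribution_def marginals_ok_def)
  define \<mu>' where "\<mu>' S = (if S \<subseteq> {1..n} then \<mu> S else 0)" for S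
  have \<mu>'_eq: "(\<Sum>S\<in>{S\<in>Pow {1..n}. P S}. \<mu>' S) = (\<Sum>S\<in>{S\<in>Pow {1..n}. P S}. \<mu> S)" for P
    by (intro sum.cong) (auto simp: \<mu>'_def)
  have "?E \<mu>' = ?E \<mu>" by (intro sum.cong) (auto simp: \<mu>'_def)
  moreover have "is_distribution n \<mu>'" "marginals_ok n x \<mu>'" "pairwise_ok n x \<mu>'"
    using \<mu> \<mu>'_eq[of "\<lambda>_. True"]
    by (auto simp: \<mu>'_def gap_witness_def marginal_dist_def pairwise_indep_def is_distribution_def
        marginals_ok_def pairwise_ok_def \<mu>'_eq)
  ultimately have in_P: "?E \<mu> \<in> ?P" by (metis (mono_tags, lifting) mem_Collect_eq)
  have "bdd_above ?P"
    by (rule bdd_above_mono[OF bdd_above_expectations[of "{1..n}" f x, OF finite_atLeastAtMost]])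
      (use marginal in blast)
  then have "?E \<mu> \<le> Sup ?P" using in_P by (rule cSup_upper[rotated])
  have "Sup ?C \<le> 4/3 * ?E \<mu>"
  proof (rule cSup_least)
    show "?C \<noteq> {}" using in_P by blast
  qed (use \<mu> marginal in \<open>auto simp: gap_witness_def\<close>)
  also have "\<dots> \<le> 4/3 * Sup ?P" using \<open>?E \<mu> \<le> Sup ?P\<close> by simp
  finally show ?thesis unfolding concave_closure_def upper_pi_ext_def .
qed

theorem mainTheorem10:
  fixes n m :: nat
    and B :: "nat \<Rightarrow> nat set"
    and fi :: "nat \<Rightarrow> nat set \<Rightarrow> real"
    and x :: "nat \<Rightarrow> real"
  assumes blocks_cover: "(\<Union>i\<in>{1..m}. B i) = {1..n}"
    and blocks_disj: "\<forall>i\<in>{1..m}. \<forall>j\<in>{1..m}. i \<noteq> j \<longrightarrow> B i \<inter> B j = {}"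
    and blocks_size: "\<forall>i\<in>{1..m}. card (B i) \<in> {1, 2, 3}"
    and fi_nonneg: "\<forall>i\<in>{1..m}. nonneg_set_fun (B i) (fi i)"
    and fi_mono: "\<forall>i\<in>{1..m}. monotone_set_fun (B i) (fi i)"
    and fi_submod: "\<forall>i\<in>{1..m}. submodular_set_fun (B i) (fi i)"
    and x_range: "\<forall>i\<in>{1..n}. 0 \<le> x i \<and> x i \<le> 1"
  shows "concave_closure n (\<lambda>S. \<Sum>i=1..m. fi i (S \<inter> B i)) x
           \<le> 4 / 3 * upper_pi_ext n (\<lambda>S. \<Sum>i=1..m. fi i (S \<inter> B i)) x"
proof -
  have finite_blocks: "finite (B i)" if "i \<in> {1..m}" for i
  proof -
    have "card (B i) \<noteq> 0" using blocks_size[rule_format, OF that] by auto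
    then show ?thesis by (meson card.infinite)
  qed
  have "\<exists>\<mu>. gap_witness (B i) x (fi i) \<mu>" if "i \<in> {1..m}" for i
    using that blocks_cover blocks_size fi_nonneg fi_mono fi_submod x_range
    by (intro gap_witness_small_block) auto
  then obtain \<mu> where "\<And>i. i \<in> {1..m} \<Longrightarrow> gap_witness (B i) x (fi i) (\<mu> i)" by metis
  then have "gap_witness (\<Union>i\<in>{1..m}. B i) x (\<lambda>S. \<Sum>i=1..m. fi i (S \<inter> B i)) (prod_dist {1..m} B \<mu>)"
    using finite_blocks blocks_disj
    by (intro gap_witness_prod_dist) (auto simp: disjoint_family_on_def)
  then show ?thesis unfolding blocks_cover by (rule concave_closure_le_upper_pi_ext)
qed

end
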